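(* Let $u:\mathbb{R}^d\to\mathbb{R}$ be $\mathbb{Z}^d$-periodic and such that $D^2u\succeq-\lambda I_d$ in the weak sense, for some $\lambda\ge0$. Then for every $x\in\mathbb{R}^d$ and every $p\in\partial u(x)$, one has $|p|_\infty\le\frac12\lambda$, where $|p|_\infty=\max_i|p_i|$.
   Context: $\partial u(x)$ denotes the subdifferential of the semi-convex function $u$ at $x$ (the set of $p$ with $u(y)\ge u(x)+p\cdot(y-x)-\frac\lambda2|y-x|^2$ for all $y$). *)

theory Defs
  imports "HOL-Analysis.Analysis"
begin

definition zd_periodic :: "(real ^ 'n \<Rightarrow> real) \<Rightarrow> bool" where
  "zd_periodic u \<longleftrightarrow> (\<forall>x k. (\<forall>i. k $ i \<in> \<int>) \<longrightarrow> u (x + k) = u x)"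

text \<open>D^2 u \<succeq> -lam I in the weak sense: u + lam/2 |x|^2 is convex (semi-convexity).\<close>
definition semiconvex :: "real \<Rightarrow> (real ^ 'n \<Rightarrow> real) \<Rightarrow> bool" where
  "semiconvex lam u \<longleftrightarrow> convex_on UNIV (\<lambda>x. u x + lam / 2 * (norm x)\<^sup>2)"

definition subdiff :: "real \<Rightarrow> (real ^ 'n \<Rightarrow> real) \<Rightarrow> real ^ 'n \<Rightarrow> (real ^ 'n) set" where
  "subdiff lam u x = {p. \<forall>y. u y \<ge> u x + p \<bullet> (y - x) - lam / 2 * (norm (y - x))\<^sup>2}"

end

theory Submission
  imports Defs
begin

text \<open>Testing the subgradient inequality at the lattice translates \<open>x \<plusminus> e\<^sub>i\<close>, where periodicity
  gives \<open>u (x \<plusminus> e\<^sub>i) = u x\<close>, yields \<open>\<plusminus>p\<^sub>i \<le> \<lambda>/2\<close>. Semi-convexity and \<open>\<lambda> \<ge> 0\<close> only guarantee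
  that the subdifferential is meaningful.\<close>

lemma subdiff_periodic_inner_le:
  fixes u :: "real ^ 'n \<Rightarrow> real"
  assumes "zd_periodic u" and "p \<in> subdiff lam u x" and "\<forall>j. k $ j \<in> \<int>"
  shows "p \<bullet> k \<le> lam / 2 * (norm k)\<^sup>2"
proof -
  have "u (x + k) = u x"
    using assms(1,3) unfolding zd_periodic_def by blast
  moreover have "u (x + k) \<ge> u x + p \<bullet> k - lam / 2 * (norm k)\<^sup>2"
    using assms(2) unfolding subdiff_def by (force dest: spec[of _ "x + k"])
  ultimately show ?thesis by linarith
qed

lemma subdiff_periodic_component_le:
  fixes u :: "real ^ 'n \<Rightarrow> real"
  assumes "zd_periodic u" and "p \<in> subdiff lam u x" and "c = 1 \<or> c = -1"
  shows "c * p $ i \<le> lam / 2"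
proof -
  have integral: "\<forall>j. axis i c $ j \<in> \<int>"
    using assms(3) by (auto simp: axis_def)
  have "axis i c = c *\<^sub>R axis i (1::real)"
    by (simp add: axis_def vec_eq_iff)
  then have "norm (axis i c) = 1"
    using assms(3) by auto
  moreover have "p \<bullet> axis i c = c * p $ i"
    by (simp add: inner_axis mult.commute)
  ultimately show ?thesis
    using subdiff_periodic_inner_le[OF assms(1,2) integral] by simp
qed

theorem mainTheorem3:
  fixes u :: "real ^ 'n \<Rightarrow> real" and lam :: real
  assumes "lam \<ge> 0"
    and "zd_periodic u"
    and "semiconvex lam u"
    and "p \<in> subdiff lam u x"
  shows "(\<forall>i. \<bar>p $ i\<bar> \<le> lam / 2)"
proof
  fix i
  have "p $ i \<le> lam / 2" and "- p $ i \<le> lam / 2"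
    using subdiff_periodic_component_le[OF assms(2,4), of 1 i]
          subdiff_periodic_component_le[OF assms(2,4), of "-1" i] by simp_all
  then show "\<bar>p $ i\<bar> \<le> lam / 2" by linarith
qed

end
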